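(* Let $J,J',J''\subseteq S$ with $J=J'\cup J''$ and $j'<j''$ for all $j'\in J'$, $j''\in J''$. Then in $A$: $$\tau^+_J=\tau^+_{J'}\tau^+_{J''}+(-1)^{\#J'}q\,\tau^-_{J'}\tau^-_{J''},\qquad \tau^-_J=\tau^-_{J'}\tau^+_{J''}+(-1)^{\#J'}\tau^+_{J'}\tau^-_{J''}.$$
   Context: $S$ is a finite set with a total order $<$, $R$ a commutative ring with $1$, $q\in R$, $A=R\langle t_s\mid s\in S\rangle$ the free associative algebra. For $J=\{j_1<\dots<j_{\#J}\}\subseteq S$, $t_J=t_{j_1}\cdots t_{j_{\#J}}$ ($t_\emptyset=1$); for $I=\{j_{\alpha_1}<\dots<j_{\alpha_{\#I}}\}\subseteq J$, $\ell_J(I)=\sum_{\nu=1}^{\#I}(\alpha_\nu-\nu)$; $\tau^-_J=\sum_{I\subseteq J,\ \#I\text{ odd}}(-1)^{\ell_J(I)}(-q)^{(\#I-1)/2}t_{J\setminus I}$ and $\tau^+_J=\sum_{I\subseteq J,\ \#I\text{ even}}(-1)^{\ell_J(I)}(-q)^{\#I/2}t_{J\setminus I}$ (so $\tau^+_\emptyset=1$, $\tau^-_\emptyset=0$). *)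

theory Defs
  imports Main
begin

text \<open>The free associative algebra R<t_s | s in S> is modelled by its coefficient
functions: an element is a map from words (lists of generators) to coefficients.  All elements considered
here have finite support, i.e. are genuine noncommutative polynomials.\<close>

type_synonym ('a, 'r) ncpoly = "'a list \<Rightarrow> 'r"

definition nc_add :: "('a, 'r::comm_ring_1) ncpoly \<Rightarrow> ('a, 'r) ncpoly \<Rightarrow> ('a, 'r) ncpoly" where
  "nc_add f g = (\<lambda>w. f w + g w)"

definition nc_smult :: "'r::comm_ring_1 \<Rightarrow> ('a, 'r) ncpoly \<Rightarrow> ('a, 'r) ncpoly" where
  "nc_smult c f = (\<lambda>w. c * f w)"

definition nc_mult :: "('a, 'r::comm_ring_1) ncpoly \<Rightarrow> ('a, 'r) ncpoly \<Rightarrow> ('a, 'r) ncpoly" where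
  "nc_mult f g = (\<lambda>w. \<Sum>i\<le>length w. f (take i w) * g (drop i w))"

definition nc_monom :: "'a list \<Rightarrow> ('a, 'r::comm_ring_1) ncpoly" where
  "nc_monom u = (\<lambda>w. if w = u then 1 else 0)"

definition tJ :: "'a::linorder set \<Rightarrow> ('a, 'r::comm_ring_1) ncpoly" where
  "tJ J = nc_monom (sorted_list_of_set J)"

text \<open>Position (1-based) of an element i in J.\<close>
definition pos :: "'a::linorder set \<Rightarrow> 'a \<Rightarrow> nat" where
  "pos J i = card {j \<in> J. j \<le> i}"

text \<open>ell_J(I) = sum_{nu=1}^{#I} (alpha_nu - nu), where the nu-th smallest element
of I is the alpha_nu-th smallest element of J.\<close>
definition ell :: "'a::linorder set \<Rightarrow> 'a set \<Rightarrow> nat" where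
  "ell J I = (\<Sum>\<nu><card I. pos J (sorted_list_of_set I ! \<nu>) - (\<nu> + 1))"

definition tau_minus :: "'r::comm_ring_1 \<Rightarrow> 'a::linorder set \<Rightarrow> ('a, 'r) ncpoly" where
  "tau_minus q J = (\<lambda>w. \<Sum>I\<in>{I. I \<subseteq> J \<and> odd (card I)}.
      (-1) ^ ell J I * (- q) ^ ((card I - 1) div 2) * tJ (J - I) w)"

definition tau_plus :: "'r::comm_ring_1 \<Rightarrow> 'a::linorder set \<Rightarrow> ('a, 'r) ncpoly" where
  "tau_plus q J = (\<lambda>w. \<Sum>I\<in>{I. I \<subseteq> J \<and> even (card I)}.
      (-1) ^ ell J I * (- q) ^ (card I div 2) * tJ (J - I) w)"

end

theory Submission
  imports Defs
begin

text \<open>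
  Since every element of \<open>J'\<close> precedes every element of \<open>J''\<close>, a subset \<open>I\<close> of \<open>J\<close>
  splits uniquely as \<open>A \<union> B\<close> with \<open>A \<subseteq> J'\<close>, \<open>B \<subseteq> J''\<close>, and the monomial factors as
  \<open>t\<^bsub>J-I\<^esub> = t\<^bsub>J'-A\<^esub> t\<^bsub>J''-B\<^esub>\<close>. So it suffices to factor the coefficients. The
  inversion count satisfies \<open>\<ell>\<^sub>J(A \<union> B) = \<ell>\<^sub>J'(A) + \<ell>\<^sub>J''(B) + #B (#J' - #A)\<close>, because each
  element of \<open>B\<close> is overtaken by the \<open>#J' - #A\<close> elements of \<open>J' - A\<close>; a parity case
  analysis on \<open>#A\<close> and \<open>#B\<close> then turns the sign \<open>(-1)\<^bsup>#B(#J'-#A)\<^esup>\<close> and the power of \<open>-q\<close>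
  into the two terms of each identity.
\<close>

lemma sum_lessThan_add: "(\<Sum>i<m + (n::nat). f i) = (\<Sum>i<m. f i) + (\<Sum>i<n. f (m + i))"
  by (induction n) (auto simp: add.assoc)

lemma sorted_list_of_set_Un_less:
  fixes X Y :: "'a::linorder set"
  assumes "finite X" "finite Y" "\<forall>x\<in>X. \<forall>y\<in>Y. x < y"
  shows "sorted_list_of_set (X \<union> Y) = sorted_list_of_set X @ sorted_list_of_set Y"
proof -
  have "X \<inter> Y = {}" using assms(3) by fastforce
  with assms show ?thesis
    by (intro sorted_list_of_set_unique[THEN iffD1]) (auto simp: sorted_wrt_append card_Un_disjoint)
qed

lemma nc_mult_monom: "nc_mult (nc_monom u) (nc_monom v) = nc_monom (u @ v)"
proof
  fix w
  have "nc_mult (nc_monom u) (nc_monom v) w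
      = (\<Sum>i\<le>length w. if i = length u \<and> w = u @ v then 1 else 0)"
    unfolding nc_mult_def nc_monom_def by (rule sum.cong) auto
  also have "\<dots> = nc_monom (u @ v) w"
    by (simp add: nc_monom_def)
  finally show "nc_mult (nc_monom u) (nc_monom v) w = nc_monom (u @ v) w" .
qed

lemma nc_mult_sum_sum:
  "nc_mult (\<lambda>w. \<Sum>a\<in>P. c a * F a w) (\<lambda>w. \<Sum>b\<in>Q. d b * G b w) w
   = (\<Sum>a\<in>P. \<Sum>b\<in>Q. c a * d b * nc_mult (F a) (G b) w)"
proof -
  have "nc_mult (\<lambda>w. \<Sum>a\<in>P. c a * F a w) (\<lambda>w. \<Sum>b\<in>Q. d b * G b w) w
      = (\<Sum>i\<le>length w. \<Sum>a\<in>P. \<Sum>b\<in>Q. c a * d b * (F a (take i w) * G b (drop i w)))"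
    unfolding nc_mult_def sum_product by (simp add: mult_ac)
  also have "\<dots> = (\<Sum>a\<in>P. \<Sum>b\<in>Q. c a * d b * nc_mult (F a) (G b) w)"
    unfolding nc_mult_def sum_distrib_left by (subst sum.swap) (simp add: sum.swap[of _ Q])
  finally show ?thesis .
qed

lemma tJ_Un_less:
  assumes "finite X" "finite Y" "\<forall>x\<in>X. \<forall>y\<in>Y. x < y"
  shows "tJ (X \<union> Y) = nc_mult (tJ X) (tJ Y)"
  unfolding tJ_def using assms by (simp add: sorted_list_of_set_Un_less nc_mult_monom)

lemma pos_sorted_list_of_set_nth:
  fixes B :: "'a::linorder set"
  assumes "finite B" "m < card B"
  shows "pos B (sorted_list_of_set B ! m) = Suc m"
proof -
  let ?L = "sorted_list_of_set B"
  have sorted: "sorted_wrt (<) ?L" and len: "length ?L = card B"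
    using assms by auto
  have "{j\<in>B. j \<le> ?L ! m} = (!) ?L ` {..m}"
  proof (intro set_eqI iffI)
    fix j assume "j \<in> {j\<in>B. j \<le> ?L ! m}"
    then obtain k where k: "k < length ?L" "j = ?L ! k" "j \<le> ?L ! m"
      using assms(1) by (metis (no_types, lifting) in_set_conv_nth mem_Collect_eq set_sorted_list_of_set)
    have "k \<le> m"
      using sorted_wrt_nth_less[OF sorted, of m k] k by force
    then show "j \<in> (!) ?L ` {..m}" using k by auto
  next
    fix j assume "j \<in> (!) ?L ` {..m}"
    then obtain k where k: "k \<le> m" "j = ?L ! k" by auto
    then have "j \<in> set ?L" using assms len by (simp del: set_sorted_list_of_set)
    moreover have "j \<le> ?L ! m"
      using sorted_wrt_nth_less[OF sorted, of k m] k assms len by (cases "k = m") auto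
    ultimately show "j \<in> {j\<in>B. j \<le> ?L ! m}" using assms(1) by simp
  qed
  moreover have "inj_on ((!) ?L) {..m}"
    using assms len by (auto simp: inj_on_def nth_eq_iff_index_eq)
  ultimately show ?thesis unfolding pos_def by (simp add: card_image)
qed

lemma pos_mono:
  assumes "finite J" "B \<subseteq> J"
  shows "pos B x \<le> pos J x"
  unfolding pos_def using assms by (intro card_mono) auto

lemma pos_Un_less_left:
  assumes "\<forall>x\<in>J'. \<forall>y\<in>J''. x < y" "x \<in> J'"
  shows "pos (J' \<union> J'') x = pos J' x"
proof -
  have "{j \<in> J' \<union> J''. j \<le> x} = {j \<in> J'. j \<le> x}"
    using assms by (auto dest: leD)
  then show ?thesis unfolding pos_def by simp
qed

lemma pos_Un_less_right:
  assumes "finite J'" "finite J''" "\<forall>x\<in>J'. \<forall>y\<in>J''. x < y" "x \<in> J''"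
  shows "pos (J' \<union> J'') x = card J' + pos J'' x"
proof -
  have "{j \<in> J' \<union> J''. j \<le> x} = J' \<union> {j \<in> J''. j \<le> x}"
    using assms by (auto intro: less_imp_le)
  moreover have "J' \<inter> {j \<in> J''. j \<le> x} = {}"
    using assms(3) by fastforce
  ultimately show ?thesis unfolding pos_def using assms by (simp add: card_Un_disjoint)
qed

lemma ell_Un_less:
  fixes J' J'' A B :: "'a::linorder set"
  assumes fin: "finite J'" "finite J''" and less: "\<forall>x\<in>J'. \<forall>y\<in>J''. x < y"
    and sub: "A \<subseteq> J'" "B \<subseteq> J''"
  shows "ell (J' \<union> J'') (A \<union> B) = ell J' A + ell J'' B + card B * (card J' - card A)"
proof -
  let ?J = "J' \<union> J''" and ?LA = "sorted_list_of_set A" and ?LB = "sorted_list_of_set B"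
  have finA: "finite A" and finB: "finite B"
    using sub fin finite_subset by blast+
  have lessAB: "\<forall>x\<in>A. \<forall>y\<in>B. x < y" using less sub by blast
  then have "A \<inter> B = {}" by fastforce
  then have card_AB: "card (A \<union> B) = card A + card B" by (simp add: card_Un_disjoint finA finB)
  have left: "pos ?J ((?LA @ ?LB) ! \<nu>) - (\<nu> + 1) = pos J' (?LA ! \<nu>) - (\<nu> + 1)"
    if "\<nu> < card A" for \<nu>
  proof -
    have "?LA ! \<nu> \<in> J'" using that finA sub nth_mem[of \<nu> ?LA] by auto
    then show ?thesis using that finA less by (simp add: nth_append pos_Un_less_left)
  qed
  have right: "pos ?J ((?LA @ ?LB) ! (card A + \<mu>)) - (card A + \<mu> + 1)
      = (card J' - card A) + (pos J'' (?LB ! \<mu>) - (\<mu> + 1))"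
    if "\<mu> < card B" for \<mu>
  proof -
    have "?LB ! \<mu> \<in> J''" using that finB sub nth_mem[of \<mu> ?LB] by auto
    moreover have "Suc \<mu> \<le> pos J'' (?LB ! \<mu>)"
      using pos_sorted_list_of_set_nth[OF finB that] pos_mono[OF fin(2) sub(2)] by metis
    moreover have "card A \<le> card J'" using card_mono[OF fin(1) sub(1)] .
    ultimately show ?thesis
      using finA fin less by (simp add: nth_append pos_Un_less_right)
  qed
  have "ell ?J (A \<union> B) = (\<Sum>\<nu><card A + card B. pos ?J ((?LA @ ?LB) ! \<nu>) - (\<nu> + 1))"
    unfolding ell_def card_AB sorted_list_of_set_Un_less[OF finA finB lessAB] ..
  also have "\<dots> = (\<Sum>\<nu><card A. pos J' (?LA ! \<nu>) - (\<nu> + 1))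
      + (\<Sum>\<mu><card B. (card J' - card A) + (pos J'' (?LB ! \<mu>) - (\<mu> + 1)))"
    unfolding sum_lessThan_add using left right by simp
  also have "\<dots> = ell J' A + ell J'' B + card B * (card J' - card A)"
    unfolding ell_def by (simp add: sum.distrib)
  finally show ?thesis .
qed

lemma sum_Pow_Un_disjoint:
  assumes "finite X" "finite Y" "X \<inter> Y = {}"
  shows "(\<Sum>I\<in>Pow (X \<union> Y). g I) = (\<Sum>A\<in>Pow X. \<Sum>B\<in>Pow Y. g (A \<union> B))"
proof -
  have Pow_Un: "Pow (X \<union> Y) = (\<lambda>(A, B). A \<union> B) ` (Pow X \<times> Pow Y)"
  proof (intro equalityI subsetI)
    fix I assume "I \<in> Pow (X \<union> Y)"
    then have "I = (I \<inter> X) \<union> (I \<inter> Y)" "(I \<inter> X, I \<inter> Y) \<in> Pow X \<times> Pow Y" by auto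
    then show "I \<in> (\<lambda>(A, B). A \<union> B) ` (Pow X \<times> Pow Y)" by (metis case_prod_conv image_eqI)
  qed auto
  have inj: "inj_on (\<lambda>(A, B). A \<union> B) (Pow X \<times> Pow Y)"
  proof (rule inj_onI, clarsimp)
    fix A B A' B' assume "A \<subseteq> X" "B \<subseteq> Y" "A' \<subseteq> X" "B' \<subseteq> Y" "A \<union> B = A' \<union> B'"
    then have "A = (A' \<union> B') \<inter> X" "A' = (A' \<union> B') \<inter> X"
      "B = (A' \<union> B') \<inter> Y" "B' = (A' \<union> B') \<inter> Y"
      using assms(3) by blast+
    then show "A = A' \<and> B = B'" by simp
  qed
  show ?thesis
    unfolding Pow_Un sum.reindex[OF inj] by (simp add: sum.cartesian_product case_prod_beta)
qed

definition tJ_expansion :: "('a::linorder set \<Rightarrow> 'r::comm_ring_1) \<Rightarrow> 'a set \<Rightarrow> ('a, 'r) ncpoly" where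
  "tJ_expansion c K = (\<lambda>w. \<Sum>I\<in>Pow K. c I * tJ (K - I) w)"

lemma nc_mult_tJ_expansion:
  assumes "finite J'" "finite J''" "\<forall>x\<in>J'. \<forall>y\<in>J''. x < y"
  shows "nc_mult (tJ_expansion c' J') (tJ_expansion c'' J'') w
    = (\<Sum>A\<in>Pow J'. \<Sum>B\<in>Pow J''. c' A * c'' B * tJ ((J' \<union> J'') - (A \<union> B)) w)"
proof -
  have tJ_diff: "tJ ((J' \<union> J'') - (A \<union> B)) = nc_mult (tJ (J' - A)) (tJ (J'' - B))"
    if "A \<subseteq> J'" "B \<subseteq> J''" for A B
  proof -
    have "(J' \<union> J'') - (A \<union> B) = (J' - A) \<union> (J'' - B)" using assms(3) that by fastforce
    then show ?thesis using assms by (simp add: tJ_Un_less)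
  qed
  then show ?thesis
    unfolding tJ_expansion_def nc_mult_sum_sum by (intro sum.cong refl) (simp add: tJ_diff)
qed

lemma tJ_expansion_Un_less:
  assumes "finite J'" "finite J''" "\<forall>x\<in>J'. \<forall>y\<in>J''. x < y"
    and coeff: "\<And>A B. A \<subseteq> J' \<Longrightarrow> B \<subseteq> J'' \<Longrightarrow> c (A \<union> B) = c' A * c'' B + k * (d' A * d'' B)"
  shows "tJ_expansion c (J' \<union> J'') = nc_add (nc_mult (tJ_expansion c' J') (tJ_expansion c'' J''))
           (nc_smult k (nc_mult (tJ_expansion d' J') (tJ_expansion d'' J'')))"
proof
  fix w
  have "J' \<inter> J'' = {}" using assms(3) by fastforce
  then have "tJ_expansion c (J' \<union> J'') w
      = (\<Sum>A\<in>Pow J'. \<Sum>B\<in>Pow J''. c (A \<union> B) * tJ ((J' \<union> J'') - (A \<union> B)) w)"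
    unfolding tJ_expansion_def using assms by (simp add: sum_Pow_Un_disjoint)
  also have "\<dots> = nc_add (nc_mult (tJ_expansion c' J') (tJ_expansion c'' J''))
           (nc_smult k (nc_mult (tJ_expansion d' J') (tJ_expansion d'' J''))) w"
    unfolding nc_add_def nc_smult_def nc_mult_tJ_expansion[OF assms(1-3)]
    by (simp add: coeff sum.distrib sum_distrib_left algebra_simps)
  finally show "tJ_expansion c (J' \<union> J'') w = \<dots>" .
qed

definition tau_coeff_even :: "'r::comm_ring_1 \<Rightarrow> nat \<Rightarrow> nat \<Rightarrow> 'r" where
  "tau_coeff_even q e n = (if even n then (-1) ^ e * (-q) ^ (n div 2) else 0)"

definition tau_coeff_odd :: "'r::comm_ring_1 \<Rightarrow> nat \<Rightarrow> nat \<Rightarrow> 'r" where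
  "tau_coeff_odd q e n = (if odd n then (-1) ^ e * (-q) ^ ((n - 1) div 2) else 0)"

lemma tau_coeff_even_add:
  fixes q :: "'r::comm_ring_1"
  assumes "a \<le> n"
  shows "tau_coeff_even q (e + e' + b * (n - a)) (a + b)
    = tau_coeff_even q e a * tau_coeff_even q e' b
      + (-1) ^ n * q * (tau_coeff_odd q e a * tau_coeff_odd q e' b)"
proof -
  obtain d where "n = a + d" using assms le_Suc_ex by blast
  then show ?thesis unfolding tau_coeff_even_def tau_coeff_odd_def
    by (cases "even a"; cases "even b") (auto elim!: evenE oddE simp: power_add power_mult mult_ac)
qed

lemma tau_coeff_odd_add:
  fixes q :: "'r::comm_ring_1"
  assumes "a \<le> n"
  shows "tau_coeff_odd q (e + e' + b * (n - a)) (a + b)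
    = tau_coeff_odd q e a * tau_coeff_even q e' b
      + (-1) ^ n * (tau_coeff_even q e a * tau_coeff_odd q e' b)"
proof -
  obtain d where "n = a + d" using assms le_Suc_ex by blast
  then show ?thesis unfolding tau_coeff_even_def tau_coeff_odd_def
    by (cases "even a"; cases "even b") (auto elim!: evenE oddE simp: power_add power_mult mult_ac)
qed

lemma sum_Pow_filter:
  assumes "finite K"
  shows "(\<Sum>I | I \<subseteq> K \<and> P I. f I) = (\<Sum>I\<in>Pow K. if P I then f I else 0)"
proof -
  have "{I. I \<subseteq> K \<and> P I} = {I\<in>Pow K. P I}" by auto
  then show ?thesis using assms by (simp only: sum.inter_filter finite_Pow_iff)
qed

lemma tau_plus_eq_tJ_expansion:
  assumes "finite K"
  shows "tau_plus q K = tJ_expansion (\<lambda>I. tau_coeff_even q (ell K I) (card I)) K"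
  unfolding tau_plus_def tJ_expansion_def tau_coeff_even_def sum_Pow_filter[OF assms]
  by (intro ext sum.cong) auto

lemma tau_minus_eq_tJ_expansion:
  assumes "finite K"
  shows "tau_minus q K = tJ_expansion (\<lambda>I. tau_coeff_odd q (ell K I) (card I)) K"
  unfolding tau_minus_def tJ_expansion_def tau_coeff_odd_def sum_Pow_filter[OF assms]
  by (intro ext sum.cong) auto

lemma tau_coeff_Un_less:
  fixes q :: "'r::comm_ring_1"
  assumes fin: "finite J'" "finite J''" and less: "\<forall>x\<in>J'. \<forall>y\<in>J''. x < y"
    and sub: "A \<subseteq> J'" "B \<subseteq> J''"
  shows "tau_coeff_even q (ell (J' \<union> J'') (A \<union> B)) (card (A \<union> B))
       = tau_coeff_even q (ell J' A) (card A) * tau_coeff_even q (ell J'' B) (card B)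
         + (-1) ^ card J' * q * (tau_coeff_odd q (ell J' A) (card A) * tau_coeff_odd q (ell J'' B) (card B))" (is ?even)
    and "tau_coeff_odd q (ell (J' \<union> J'') (A \<union> B)) (card (A \<union> B))
       = tau_coeff_odd q (ell J' A) (card A) * tau_coeff_even q (ell J'' B) (card B)
         + (-1) ^ card J' * (tau_coeff_even q (ell J' A) (card A) * tau_coeff_odd q (ell J'' B) (card B))" (is ?odd)
proof -
  have "A \<inter> B = {}" using less sub by fastforce
  then have "card (A \<union> B) = card A + card B"
    using sub fin by (intro card_Un_disjoint) (auto intro: finite_subset)
  moreover note ell_Un_less[OF fin less sub] card_mono[OF fin(1) sub(1)]
  ultimately show ?even and ?odd
    by (simp_all add: tau_coeff_even_add tau_coeff_odd_add mult.assoc)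
qed

theorem lemma3p1:
  fixes S :: "'a::linorder set" and q :: "'r::comm_ring_1"
    and J J' J'' :: "'a set"
  assumes "finite S"
    and "J \<subseteq> S" and "J' \<subseteq> S" and "J'' \<subseteq> S"
    and "J = J' \<union> J''"
    and "\<forall>j'\<in>J'. \<forall>j''\<in>J''. j' < j''"
  shows "tau_plus q J = nc_add (nc_mult (tau_plus q J') (tau_plus q J''))
             (nc_smult ((-1) ^ card J' * q) (nc_mult (tau_minus q J') (tau_minus q J'')))
       \<and> tau_minus q J = nc_add (nc_mult (tau_minus q J') (tau_plus q J''))
             (nc_smult ((-1) ^ card J') (nc_mult (tau_plus q J') (tau_minus q J'')))"
proof -
  have fin: "finite J'" "finite J''"
    using assms finite_subset by blast+
  then have finJ: "finite (J' \<union> J'')" by simp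
  show ?thesis
    unfolding assms(5) tau_plus_eq_tJ_expansion[OF finJ] tau_minus_eq_tJ_expansion[OF finJ]
      tau_plus_eq_tJ_expansion[OF fin(1)] tau_minus_eq_tJ_expansion[OF fin(1)]
      tau_plus_eq_tJ_expansion[OF fin(2)] tau_minus_eq_tJ_expansion[OF fin(2)]
    using fin assms(6) by (intro conjI tJ_expansion_Un_less tau_coeff_Un_less)
qed

end
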